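(* For every integer $b\geq 2$, $$\bar J(b)+\frac{(-1)^{b-1}}{2^b}J(b)=\lambda(b)\ln 2+\sum_{j=1}^{b-2}\frac{(-1)^{j+1}}{2^{j+1}}\lambda(b-j)\zeta(j+1),$$ where an empty sum equals $0$.
   Context: $S_n=1+\frac13+\cdots+\frac{1}{2n-1}$ for $n\geq 1$. For $b>1$, $J(b)=\sum_{n\geq 1}\frac{S_n}{n^b}$ and $\bar J(b)=\sum_{n\geq 1}\frac{S_n}{(2n-1)^b}$. For real $s>1$, $\lambda(s)=\sum_{n\geq 1}\frac{1}{(2n-1)^s}=(1-2^{-s})\zeta(s)$, and $\zeta$ is the Riemann zeta function. *)

theory Defs
  imports "HOL-Analysis.Analysis"
begin

definition S :: "nat \<Rightarrow> real" where
  "S n = (\<Sum>k=1..n. 1 / (2 * real k - 1))"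

definition zeta_real :: "real \<Rightarrow> real" where
  "zeta_real s = (\<Sum>n. 1 / (real (Suc n)) powr s)"

definition dlambda :: "real \<Rightarrow> real" where
  "dlambda s = (1 - 2 powr (-s)) * zeta_real s"

definition J :: "real \<Rightarrow> real" where
  "J b = (\<Sum>n. S (Suc n) / (real (Suc n)) powr b)"

definition Jbar :: "real \<Rightarrow> real" where
  "Jbar b = (\<Sum>n. S (Suc n) / (2 * real (Suc n) - 1) powr b)"

end

theory Submission
  imports Defs
begin

text \<open>
  With \<open>p = 2k + 1\<close>, \<open>d = 2r + 2\<close> and \<open>m = b - 2\<close>, the partial fraction expansion
  \<open>\<Sum>j=1..m. (-1)^(j+1) / (p^(m+2-j) d^(j+1)) = 1 / (p^(m+1) d (p + d)) - (-1)^m / (p d^(m+1) (p + d))\<close>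
  is summed over all pairs \<open>(k, r)\<close>; all the double series involved have nonnegative terms,
  so they may be summed in either order.  On the left each term factors, giving
  \<open>\<lambda>(b - j) \<zeta>(j + 1) / 2^(j+1)\<close>.  On the right, summing \<open>1/d - 1/(p + d)\<close> over \<open>r\<close>
  telescopes to \<open>S(k+1) - ln 2\<close>, which produces \<open>Jbar(b) - \<lambda>(b) ln 2\<close>, and summing
  \<open>1/p - 1/(p + d)\<close> over \<open>k\<close> telescopes to \<open>S(r+1)\<close>, which produces \<open>J(b) / 2^b\<close>.
\<close>

lemma has_sum_sum:
  fixes f :: "'i \<Rightarrow> 'a \<Rightarrow> 'b::topological_comm_monoid_add"
  assumes "finite I" "\<And>i. i \<in> I \<Longrightarrow> (f i has_sum s i) A"
  shows "((\<lambda>x. \<Sum>i\<in>I. f i x) has_sum (\<Sum>i\<in>I. s i)) A"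
  using assms by (induction I rule: finite_induct) (auto intro: has_sum_add)

lemma nonneg_sums_iterated_has_sum:
  fixes f :: "nat \<times> nat \<Rightarrow> real"
  assumes nonneg: "\<And>x. f x \<ge> 0"
    and rows: "\<And>k. (\<lambda>r. f (k, r)) sums g k" and "g sums s"
  shows "(f has_sum s) UNIV"
proof -
  have "g k \<ge> 0" for k
    using rows[of k] nonneg by (metis sums_unique suminf_nonneg sums_summable)
  with \<open>g sums s\<close> have g: "(g has_sum s) UNIV"
    by (rule sums_nonneg_imp_has_sum)
  have f: "((\<lambda>r. f (k, r)) has_sum g k) UNIV" for k
    using rows nonneg by (rule sums_nonneg_imp_has_sum)
  have "f summable_on UNIV \<times> UNIV"
    using f has_sum_imp_summable[OF g] nonneg by (rule summable_on_SigmaI)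
  with f g have "(f has_sum s) (UNIV \<times> UNIV)"
    by (rule has_sum_SigmaI)
  then show ?thesis
    by simp
qed

lemma nonneg_sums_iterated_has_sum_swap:
  fixes f :: "nat \<times> nat \<Rightarrow> real"
  assumes "\<And>x. f x \<ge> 0"
    and "\<And>r. (\<lambda>k. f (k, r)) sums g r" and "g sums s"
  shows "(f has_sum s) UNIV"
proof -
  have "((\<lambda>(r, k). f (k, r)) has_sum s) (UNIV \<times> UNIV)"
    using assms by (subst UNIV_Times_UNIV, rule_tac nonneg_sums_iterated_has_sum) auto
  then show ?thesis
    by (subst (asm) has_sum_swap) simp
qed

lemma sums_telescope_shift:
  fixes g :: "nat \<Rightarrow> 'a::real_normed_vector"
  assumes "g \<longlonglongrightarrow> 0"
  shows "(\<lambda>k. g k - g (k + m)) sums (\<Sum>k<m. g k)"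
proof (induction m)
  case (Suc m)
  have "(\<lambda>k. g (k + m)) \<longlonglongrightarrow> 0"
    using assms by (rule LIMSEQ_ignore_initial_segment)
  from telescope_sums'[OF this] have "(\<lambda>k. g (k + m) - g (k + Suc m)) sums g m"
    by simp
  from sums_add[OF Suc this] show ?case
    by (simp add: algebra_simps)
qed simp

lemma S_eq_sum_lessThan: "S n = (\<Sum>i<n. 1 / (2 * real i + 1))"
  by (induction n) (auto simp: S_def sum.cl_ivl_Suc field_simps)

lemma S_nonneg: "S n \<ge> 0"
  by (simp add: S_eq_sum_lessThan sum_nonneg)

lemma inverse_linear_LIMSEQ_zero:
  assumes "c \<ge> 1"
  shows "(\<lambda>k. 1 / (2 * real k + c)) \<longlonglongrightarrow> 0"
proof (rule Lim_null_comparison[OF _ LIMSEQ_inverse_real_of_nat])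
  show "\<forall>\<^sub>F k in sequentially. norm (1 / (2 * real k + c)) \<le> inverse (real (Suc k))"
    using assms by (auto simp: divide_simps)
qed

lemma S_Suc_sums:
  "(\<lambda>k. 1 / (2 * real k + 1) - 1 / (2 * real k + 2 * real r + 3)) sums S (Suc r)"
  using sums_telescope_shift[OF inverse_linear_LIMSEQ_zero[of 1], of "Suc r"]
  by (simp add: S_eq_sum_lessThan algebra_simps)

lemma S_Suc_minus_ln2_sums:
  "(\<lambda>r. 1 / (2 * real r + 2) - 1 / (2 * real r + 2 * real k + 3)) sums (S (Suc k) - ln 2)"
proof -
  have first: "(\<lambda>r. 1 / (2 * real r + 1) - 1 / (2 * real r + 3)) sums 1"
    using sums_telescope_shift[OF inverse_linear_LIMSEQ_zero[of 1], of 1]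
    by (simp add: algebra_simps)
  have ln2: "(\<lambda>r. 1 / (2 * real r + 1) - 1 / (2 * real r + 2)) sums ln 2"
    using alternating_harmonic_series_sums' by (simp add: divide_inverse add_ac)
  have "S (Suc k) - 1 = (\<Sum>i<k. 1 / (2 * real i + 3))"
    unfolding S_eq_sum_lessThan by (subst sum.lessThan_Suc_shift) (simp add: add_ac)
  then have rest: "(\<lambda>r. 1 / (2 * real r + 3) - 1 / (2 * real r + 2 * real k + 3)) sums (S (Suc k) - 1)"
    using sums_telescope_shift[OF inverse_linear_LIMSEQ_zero[of 3], of k]
    by (simp add: algebra_simps)
  from sums_add[OF sums_diff[OF first ln2] rest] show ?thesis
    by (simp add: algebra_simps)
qed

lemma S_le_sqrt: "S n \<le> sqrt (2 * real n)"
proof (induction n)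
  case (Suc n)
  show ?case
  proof (cases "n = 0")
    case False
    define x y where "x = sqrt (2 * real n)" and "y = sqrt (2 * real (Suc n))"
    have "y > 0" "x \<le> y"
      by (simp_all add: x_def y_def)
    have "y \<le> 2 * real n + 1"
    proof -
      have "2 * real n + 2 \<le> (2 * real n + 1) * 3"
        by simp
      also have "\<dots> \<le> (2 * real n + 1)\<^sup>2"
        unfolding power2_eq_square using False by (intro mult_left_mono) auto
      finally show ?thesis
        unfolding y_def by (intro real_le_lsqrt) auto
    qed
    then have "1 / (2 * real n + 1) \<le> 1 / y"
      using \<open>y > 0\<close> by (simp add: frac_le)
    moreover have "1 / y \<le> y - x"
    proof -
      have "2 = (y - x) * (y + x)"
        by (simp add: x_def y_def algebra_simps)
      also have "\<dots> \<le> (y - x) * (2 * y)"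
        using \<open>x \<le> y\<close> by (intro mult_left_mono) auto
      finally show ?thesis
        using \<open>y > 0\<close> by (simp add: field_simps)
    qed
    moreover have "S (Suc n) = S n + 1 / (2 * real n + 1)"
      by (simp add: S_eq_sum_lessThan)
    ultimately show ?thesis
      using Suc.IH by (simp add: x_def y_def)
  qed (simp add: S_def)
qed (simp add: S_def)

lemma summable_S_Suc_over_square: "summable (\<lambda>n. S (Suc n) / real (Suc n) ^ 2)"
proof (rule summable_comparison_test'[where N = 0])
  have "summable (\<lambda>n. real (Suc n) powr (-3/2))"
    using summable_Suc_iff[of "\<lambda>n. real n powr (-3/2)"] by (simp add: summable_real_powr_iff)
  then show "summable (\<lambda>n. sqrt 2 * real (Suc n) powr (-3/2))"
    by (rule summable_mult)
  fix n
  have "norm (S (Suc n) / real (Suc n) ^ 2) \<le> sqrt (2 * real (Suc n)) / real (Suc n) ^ 2"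
    using S_le_sqrt[of "Suc n"] S_nonneg[of "Suc n"] by (simp add: divide_right_mono)
  also have "\<dots> = sqrt 2 * (real (Suc n) powr (1/2) / real (Suc n) powr 2)"
    using real_sqrt_mult[of 2 "real (Suc n)"] by (simp add: powr_half_sqrt powr_realpow)
  also have "\<dots> = sqrt 2 * real (Suc n) powr (-3/2)"
    using powr_diff[of "real (Suc n)" "1/2" 2] by simp
  finally show "norm (S (Suc n) / real (Suc n) ^ 2) \<le> sqrt 2 * real (Suc n) powr (-3/2)" .
qed

lemma summable_S_Suc_over_power:
  fixes x :: "nat \<Rightarrow> real"
  assumes "b \<ge> 2" and "\<And>n. x n \<ge> real (Suc n)"
  shows "summable (\<lambda>n. S (Suc n) / x n ^ b)"
proof (rule summable_comparison_test'[OF summable_S_Suc_over_square, where N = 0])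
  fix n
  have "real (Suc n) ^ 2 \<le> real (Suc n) ^ b"
    using assms(1) by (intro power_increasing) auto
  also have "\<dots> \<le> x n ^ b"
    using assms(2) by (intro power_mono) auto
  finally show "norm (S (Suc n) / x n ^ b) \<le> S (Suc n) / real (Suc n) ^ 2"
    using S_nonneg by (simp add: frac_le)
qed

lemma J_sums: "b \<ge> 2 \<Longrightarrow> (\<lambda>n. S (Suc n) / real (Suc n) ^ b) sums J (real b)"
  using summable_S_Suc_over_power[of b "\<lambda>n. real (Suc n)"]
  by (simp add: J_def powr_realpow summable_sums)

lemma Jbar_sums: "b \<ge> 2 \<Longrightarrow> (\<lambda>n. S (Suc n) / (2 * real n + 1) ^ b) sums Jbar (real b)"
  using summable_S_Suc_over_power[of b "\<lambda>n. 2 * real n + 1"]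
  by (simp add: Jbar_def powr_realpow summable_sums add_ac)

lemma zeta_real_sums: "m \<ge> 2 \<Longrightarrow> (\<lambda>n. 1 / real (Suc n) ^ m) sums zeta_real (real m)"
  using inverse_power_summable[of m, where 'a = real] summable_Suc_iff[of "\<lambda>n. inverse (real n ^ m)"]
  by (simp add: zeta_real_def powr_realpow summable_sums divide_inverse)

lemma zeta_real_even_sums:
  "m \<ge> 2 \<Longrightarrow> (\<lambda>r. 1 / (2 * real r + 2) ^ m) sums (zeta_real (real m) / 2 ^ m)"
  using sums_divide[OF zeta_real_sums, of m "2 ^ m"]
  by (simp add: power_mult_distrib[symmetric] algebra_simps)

lemma dlambda_sums: "m \<ge> 2 \<Longrightarrow> (\<lambda>k. 1 / (2 * real k + 1) ^ m) sums dlambda (real m)"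
proof -
  assume m: "m \<ge> 2"
  have "(\<lambda>k. 1 / real (Suc (2 * k)) ^ m + 1 / real (Suc (2 * k + 1)) ^ m) sums zeta_real (real m)"
    using sums_group[OF zeta_real_sums[OF m], of 2] by (simp add: mult.commute)
  then have "(\<lambda>k. 1 / (2 * real k + 1) ^ m + 1 / (2 * real k + 2) ^ m) sums zeta_real (real m)"
    by (simp add: add_ac)
  from sums_diff[OF this zeta_real_even_sums[OF m]] show ?thesis
    by (simp add: dlambda_def powr_minus powr_realpow divide_inverse algebra_simps)
qed

lemma alternating_partial_fractions:
  fixes p d :: "'a::field"
  assumes "p \<noteq> 0" "d \<noteq> 0" "p + d \<noteq> 0"
  shows "(\<Sum>j=1..m. (-1) ^ (j + 1) / (p ^ (m + 2 - j) * d ^ (j + 1)))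
         = 1 / (p ^ (m + 1) * d * (p + d)) - (-1) ^ m / (p * d ^ (m + 1) * (p + d))"
proof -
  define q where "q = p + d"
  have "q \<noteq> 0"
    using assms by (simp add: q_def)
  have "(\<Sum>j=1..m. (-1) ^ (j + 1) / (p ^ (m + 2 - j) * d ^ (j + 1)))
        = 1 / (p ^ (m + 1) * d * q) - (-1) ^ m / (p * d ^ (m + 1) * q)"
  proof (induction m)
    case (Suc m)
    have "(\<Sum>j=1..Suc m. (-1) ^ (j + 1) / (p ^ (Suc m + 2 - j) * d ^ (j + 1)))
          = (\<Sum>j=1..m. (-1) ^ (j + 1) / (p ^ (m + 2 - j) * d ^ (j + 1))) / p
            + (-1) ^ m / (p ^ 2 * d ^ (m + 2))"
      by (simp add: sum.cl_ivl_Suc sum_divide_distrib Suc_diff_le numeral_2_eq_2 mult_ac)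
    also have "\<dots> = (1 / (p ^ (m + 1) * d * q) - (-1) ^ m / (p * d ^ (m + 1) * q)) / p
                      + (-1) ^ m / (p ^ 2 * d ^ (m + 2))"
      by (simp only: Suc.IH)
    also have "\<dots> = 1 / (p ^ (Suc m + 1) * d * q) - (-1) ^ Suc m / (p * d ^ (Suc m + 1) * q)"
      using assms(1,2) \<open>q \<noteq> 0\<close>
      by (simp add: field_simps power2_eq_square) (simp add: q_def algebra_simps)
    finally show ?case .
  qed simp
  then show ?thesis
    by (simp add: q_def)
qed

lemma inverse_power_mult_partial_fraction:
  fixes p d :: "'a::field"
  assumes "p \<noteq> 0" "d \<noteq> 0" "p + d \<noteq> 0"
  shows "1 / p ^ Suc n * (1 / d - 1 / (p + d)) = 1 / (p ^ n * d * (p + d))"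
proof -
  have "1 / d - 1 / (p + d) = p / (d * (p + d))"
    using assms by (simp add: field_simps)
  then show ?thesis
    using assms by simp
qed

lemma has_sum_odd_even_product:
  assumes "e \<ge> 2" "f \<ge> 2"
  shows "((\<lambda>(k, r). 1 / ((2 * real k + 1) ^ e * (2 * real r + 2) ^ f))
           has_sum dlambda (real e) * (zeta_real (real f) / 2 ^ f)) UNIV"
proof (rule nonneg_sums_iterated_has_sum)
  show "(\<lambda>r. case (k, r) of (k, r) \<Rightarrow> 1 / ((2 * real k + 1) ^ e * (2 * real r + 2) ^ f))
          sums (1 / (2 * real k + 1) ^ e * (zeta_real (real f) / 2 ^ f))" for k
    using sums_mult[OF zeta_real_even_sums[OF assms(2)], of "1 / (2 * real k + 1) ^ e"] by simp
  show "(\<lambda>k. 1 / (2 * real k + 1) ^ e * (zeta_real (real f) / 2 ^ f))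
          sums (dlambda (real e) * (zeta_real (real f) / 2 ^ f))"
    by (rule sums_mult2[OF dlambda_sums[OF assms(1)]])
qed auto

lemma has_sum_Jbar_kernel:
  assumes "b \<ge> 2"
  shows "((\<lambda>(k, r). 1 / ((2 * real k + 1) ^ (b - 1) * (2 * real r + 2) * (2 * real k + 2 * real r + 3)))
           has_sum Jbar (real b) - dlambda (real b) * ln 2) UNIV"
proof (rule nonneg_sums_iterated_has_sum)
  fix k
  have kernel_eq: "1 / ((2 * real k + 1) ^ (b - 1) * (2 * real r + 2) * (2 * real k + 2 * real r + 3))
        = 1 / (2 * real k + 1) ^ b * (1 / (2 * real r + 2) - 1 / (2 * real r + 2 * real k + 3))" for r
    using inverse_power_mult_partial_fraction[of "2 * real k + 1" "2 * real r + 2" "b - 1"] assms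
    by (simp add: Suc_diff_le algebra_simps)
  show "(\<lambda>r. case (k, r) of (k, r) \<Rightarrow>
               1 / ((2 * real k + 1) ^ (b - 1) * (2 * real r + 2) * (2 * real k + 2 * real r + 3)))
             sums (1 / (2 * real k + 1) ^ b * (S (Suc k) - ln 2))"
    unfolding case_prod_conv kernel_eq by (rule sums_mult[OF S_Suc_minus_ln2_sums])
next
  show "(\<lambda>k. 1 / (2 * real k + 1) ^ b * (S (Suc k) - ln 2)) sums (Jbar (real b) - dlambda (real b) * ln 2)"
    using sums_diff[OF Jbar_sums[OF assms] sums_mult2[OF dlambda_sums[OF assms], of "ln 2"]]
    by (simp add: diff_divide_distrib)
qed auto

lemma has_sum_J_kernel:
  assumes "b \<ge> 2"
  shows "((\<lambda>(k, r). 1 / ((2 * real k + 1) * (2 * real r + 2) ^ (b - 1) * (2 * real k + 2 * real r + 3)))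
           has_sum J (real b) / 2 ^ b) UNIV"
proof (rule nonneg_sums_iterated_has_sum_swap)
  fix r
  have kernel_eq: "1 / ((2 * real k + 1) * (2 * real r + 2) ^ (b - 1) * (2 * real k + 2 * real r + 3))
        = 1 / (2 * real r + 2) ^ b * (1 / (2 * real k + 1) - 1 / (2 * real k + 2 * real r + 3))" for k
    using inverse_power_mult_partial_fraction[of "2 * real r + 2" "2 * real k + 1" "b - 1"] assms
    by (simp add: Suc_diff_le algebra_simps)
  show "(\<lambda>k. case (k, r) of (k, r) \<Rightarrow>
               1 / ((2 * real k + 1) * (2 * real r + 2) ^ (b - 1) * (2 * real k + 2 * real r + 3)))
             sums (1 / (2 * real r + 2) ^ b * S (Suc r))"
    unfolding case_prod_conv kernel_eq by (rule sums_mult[OF S_Suc_sums])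
next
  show "(\<lambda>r. 1 / (2 * real r + 2) ^ b * S (Suc r)) sums (J (real b) / 2 ^ b)"
    using sums_divide[OF J_sums[OF assms], of "2 ^ b"]
    by (simp add: power_mult_distrib[symmetric] algebra_simps)
qed auto

lemma alternating_products_eq_kernels:
  assumes "b \<ge> 2"
  shows "(\<Sum>j=1..b-2. (-1) ^ (j + 1) * (1 / ((2 * real k + 1) ^ (b - j) * (2 * real r + 2) ^ (j + 1))))
         = 1 / ((2 * real k + 1) ^ (b - 1) * (2 * real r + 2) * (2 * real k + 2 * real r + 3))
           + (-1) ^ (b - 1) * (1 / ((2 * real k + 1) * (2 * real r + 2) ^ (b - 1) * (2 * real k + 2 * real r + 3)))"
proof -
  obtain m where m: "b = m + 2"
    using assms by (metis add.commute le_Suc_ex)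
  define p d where "p = 2 * real k + 1" and "d = 2 * real r + 2"
  have "(\<Sum>j=1..b-2. (-1) ^ (j + 1) * (1 / ((2 * real k + 1) ^ (b - j) * (2 * real r + 2) ^ (j + 1))))
        = (\<Sum>j=1..m. (-1) ^ (j + 1) / (p ^ (m + 2 - j) * d ^ (j + 1)))"
    by (simp add: m p_def d_def)
  also have "\<dots> = 1 / (p ^ (m + 1) * d * (p + d)) - (-1) ^ m / (p * d ^ (m + 1) * (p + d))"
    by (rule alternating_partial_fractions) (simp_all add: p_def d_def add_pos_pos)
  also have "\<dots> = 1 / ((2 * real k + 1) ^ (b - 1) * (2 * real r + 2) * (2 * real k + 2 * real r + 3))
           + (-1) ^ (b - 1) * (1 / ((2 * real k + 1) * (2 * real r + 2) ^ (b - 1) * (2 * real k + 2 * real r + 3)))"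
    by (simp add: m p_def d_def add_ac)
  finally show ?thesis .
qed

theorem mainTheorem9:
  fixes b :: nat
  assumes "b \<ge> 2"
  shows "Jbar (real b) + (-1) ^ (b - 1) / 2 ^ b * J (real b)
         = dlambda (real b) * ln 2
           + (\<Sum>j=1..b-2. (-1) ^ (j + 1) / 2 ^ (j + 1)
                * dlambda (real (b - j)) * zeta_real (real (j + 1)))"
proof -
  let ?f = "\<lambda>(k, r). \<Sum>j=1..b-2. (-1) ^ (j + 1) * (1 / ((2 * real k + 1) ^ (b - j) * (2 * real r + 2) ^ (j + 1)))"
  let ?L = "\<Sum>j=1..b-2. (-1) ^ (j + 1) * (dlambda (real (b - j)) * (zeta_real (real (j + 1)) / 2 ^ (j + 1)))"
  let ?R = "Jbar (real b) - dlambda (real b) * ln 2 + (-1) ^ (b - 1) * (J (real b) / 2 ^ b)"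
  have "((\<lambda>x. \<Sum>j=1..b-2. (-1) ^ (j + 1) *
            (case x of (k, r) \<Rightarrow> 1 / ((2 * real k + 1) ^ (b - j) * (2 * real r + 2) ^ (j + 1))))
          has_sum ?L) UNIV"
    by (intro has_sum_sum has_sum_cmult_right has_sum_odd_even_product) auto
  then have "(?f has_sum ?L) UNIV"
    by (simp add: case_prod_unfold)
  moreover have "(?f has_sum ?R) UNIV"
    unfolding alternating_products_eq_kernels[OF assms] split_beta'
    by (intro has_sum_add has_sum_cmult_right has_sum_Jbar_kernel[unfolded split_beta']
        has_sum_J_kernel[unfolded split_beta'] assms)
  ultimately have "?L = ?R"
    by (rule has_sum_unique)
  moreover have "(\<Sum>j=1..b-2. (-1) ^ (j + 1) / 2 ^ (j + 1) * dlambda (real (b - j)) * zeta_real (real (j + 1)))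
                 = ?L"
    by (rule sum.cong) simp_all
  ultimately show ?thesis
    by simp
qed

end
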